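(* Let $A$ be the generator of a $C_0$-semigroup $(e^{tA})_{t\ge 0}$ on a complex Banach space $X$. Then the following are equivalent: (i) $A$ is bounded; (ii) for every norm $\|\cdot\|_0$ on $X$ equivalent to the original norm, the semigroup is quasi-contractive with respect to $\|\cdot\|_0$, i.e. there exists $\lambda\in\mathbb{R}$ such that $\|e^{tA}\|_0\le e^{\lambda t}$ for all $t\ge 0$, where $\|\cdot\|_0$ also denotes the induced operator norm. *)

theory Defs
  imports "HOL-Analysis.Analysis"
begin

class complex_banach = banach +
  fixes scaleC :: "complex \<Rightarrow> 'a \<Rightarrow> 'a"
  assumes scaleC_of_real: "scaleC (complex_of_real r) x = r *\<^sub>R x"
    and scaleC_add_right: "scaleC c (x + y) = scaleC c x + scaleC c y"
    and scaleC_add_left: "scaleC (c + d) x = scaleC c x + scaleC d x"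
    and scaleC_scaleC: "scaleC c (scaleC d x) = scaleC (c * d) x"
    and norm_scaleC: "norm (scaleC c x) = cmod c * norm x"

definition bounded_clinear_op :: "('a::complex_banach \<Rightarrow> 'a) \<Rightarrow> bool" where
  "bounded_clinear_op L \<longleftrightarrow> bounded_linear L \<and> (\<forall>c x. L (scaleC c x) = scaleC c (L x))"

text \<open>A C_0-semigroup (values at negative times are irrelevant).\<close>
definition c0_semigroup :: "(real \<Rightarrow> 'a::complex_banach \<Rightarrow> 'a) \<Rightarrow> bool" where
  "c0_semigroup T \<longleftrightarrow>
     (\<forall>t\<ge>0. bounded_clinear_op (T t)) \<and>
     T 0 = id \<and>
     (\<forall>s\<ge>0. \<forall>t\<ge>0. T (s + t) = T s \<circ> T t) \<and>
     (\<forall>x. ((\<lambda>t. T t x) \<longlongrightarrow> x) (at_right 0))"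

definition gen_dom :: "(real \<Rightarrow> 'a::complex_banach \<Rightarrow> 'a) \<Rightarrow> 'a set" where
  "gen_dom T = {x. \<exists>y. ((\<lambda>h. (1 / h) *\<^sub>R (T h x - x)) \<longlongrightarrow> y) (at_right 0)}"

definition generator :: "(real \<Rightarrow> 'a::complex_banach \<Rightarrow> 'a) \<Rightarrow> 'a \<Rightarrow> 'a" where
  "generator T x = Lim (at_right 0) (\<lambda>h. (1 / h) *\<^sub>R (T h x - x))"

definition generator_bounded :: "(real \<Rightarrow> 'a::complex_banach \<Rightarrow> 'a) \<Rightarrow> bool" where
  "generator_bounded T \<longleftrightarrow> gen_dom T = UNIV \<and> bounded_linear (generator T)"

definition is_cnorm :: "('a::complex_banach \<Rightarrow> real) \<Rightarrow> bool" where
  "is_cnorm n \<longleftrightarrow>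
     (\<forall>x y. n (x + y) \<le> n x + n y) \<and>
     (\<forall>c x. n (scaleC c x) = cmod c * n x) \<and>
     (\<forall>x. n x = 0 \<longrightarrow> x = 0)"

definition equiv_norm :: "('a::complex_banach \<Rightarrow> real) \<Rightarrow> bool" where
  "equiv_norm n \<longleftrightarrow> is_cnorm n \<and>
     (\<exists>a>0. \<exists>b>0. \<forall>x. a * norm x \<le> n x \<and> n x \<le> b * norm x)"

definition opnorm_wrt :: "('a::complex_banach \<Rightarrow> real) \<Rightarrow> ('a \<Rightarrow> 'a) \<Rightarrow> real" where
  "opnorm_wrt n L = Sup ((\<lambda>x. n (L x)) ` {x. n x \<le> 1})"

end

theory Submission
  imports Defs
begin

text \<open>If the generator \<open>A\<close> is everywhere defined, uniform boundedness applied to the difference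
  quotients \<open>(T h - I) / h\<close> bounds \<open>A\<close> and gives \<open>\<parallel>T h y - y\<parallel> \<le> C h \<parallel>y\<parallel>\<close> for small \<open>h\<close>.
  For an equivalent norm \<open>n\<close> this means \<open>n (T h y) \<le> (1 + L h) n y\<close>, and iterating along a
  partition of \<open>[0, t]\<close> gives \<open>n (T t y) \<le> e\<^sup>L\<^sup>t n y\<close>.

  Conversely, a generator that is bounded on its domain is everywhere defined, because the
  orbit averages \<open>(1/s) \<integral>\<^sub>0\<^sup>s T r dr\<close> map into the domain and are invertible for small \<open>s\<close>.
  So if \<open>A\<close> is unbounded, uniform boundedness in the dual space and Hahn-Banach provide a real
  functional \<open>f\<close> such that \<open>f \<circ> A\<close> is unbounded on the unit ball of the domain. Let \<open>\<phi>\<close>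
  be the complex-linear functional with real part \<open>f\<close>; then \<open>n x = max \<parallel>x\<parallel> (K \<bar>\<phi> x\<bar>)\<close> is an
  equivalent norm. For \<open>x\<close> in the domain with \<open>\<phi> x = 1\<close>, \<open>\<parallel>x\<parallel> \<le> K\<close> and \<open>Re (\<phi> (A x)) > \<lambda>\<close> we
  have \<open>n x = K\<close>, whereas \<open>n (T h x) \<ge> K Re (\<phi> (T h x)) > K e\<^sup>\<lambda>\<^sup>h\<close> for small \<open>h > 0\<close>; hence no
  \<open>\<lambda>\<close> makes \<open>T\<close> quasi-contractive for \<open>n\<close>.\<close>

section \<open>Uniform boundedness and norming functionals\<close>

lemma uniformly_bounded_on_some_ball:
  fixes F :: "'i \<Rightarrow> 'a::banach \<Rightarrow> 'b::real_normed_vector"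
  assumes lin: "\<And>i. bounded_linear (F i)"
    and pointwise: "\<And>x. \<exists>B. \<forall>i. norm (F i x) \<le> B"
  shows "\<exists>x0 r k. r > 0 \<and> (\<forall>i. \<forall>x\<in>ball x0 r. norm (F i x) \<le> k)"
proof -
  define E where "E k = {x. \<forall>i. norm (F i x) \<le> real k}" for k :: nat
  have "closed (E k)" for k
  proof -
    have "E k = (\<Inter>i. {x. norm (F i x) \<le> real k})" by (auto simp: E_def)
    moreover have "closed {x. norm (F i x) \<le> real k}" for i
      by (intro closed_Collect_le continuous_intros linear_continuous_on lin)
    ultimately show ?thesis by auto
  qed
  moreover have "\<Union>(range E) = UNIV"
  proof safe
    fix x
    obtain B where "\<forall>i. norm (F i x) \<le> B" using pointwise by blast
    moreover have "B \<le> real (nat \<lceil>B\<rceil>)" by linarith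
    ultimately have "x \<in> E (nat \<lceil>B\<rceil>)" unfolding E_def by (auto intro: order_trans)
    then show "x \<in> \<Union>(range E)" by blast
  qed auto
  ultimately have "\<exists>k. interior (E k) \<noteq> {}"
    using Baire_category_alt[of euclidean "range E"]
    by (auto simp: completely_metrizable_space_euclidean)
  then obtain k x0 r where r: "r > 0" and sub: "ball x0 r \<subseteq> E k"
    by (meson ex_in_conv open_contains_ball open_interior interior_subset subset_trans)
  then show ?thesis unfolding E_def by blast
qed

lemma uniform_boundedness:
  fixes F :: "'i \<Rightarrow> 'a::banach \<Rightarrow> 'b::real_normed_vector"
  assumes lin: "\<And>i. bounded_linear (F i)"
    and pointwise: "\<And>x. \<exists>B. \<forall>i. norm (F i x) \<le> B"
  shows "\<exists>C\<ge>0. \<forall>i x. norm (F i x) \<le> C * norm x"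
proof -
  obtain x0 r k where r: "r > 0" and k: "\<forall>i. \<forall>x\<in>ball x0 r. norm (F i x) \<le> k"
    using uniformly_bounded_on_some_ball[OF assms] by blast
  have "0 \<le> norm (F undefined x0)" by simp
  also have "\<dots> \<le> k" using k r by simp
  finally have "k \<ge> 0" .
  have "norm (F i x) \<le> (4 * k / r) * norm x" for i x
  proof (cases "x = 0")
    case True
    then show ?thesis using linear_simps(3)[OF lin[of i]] by simp
  next
    case False
    define u where "u = (r / 2 / norm x) *\<^sub>R x"
    have "x0 + u \<in> ball x0 r" "x0 \<in> ball x0 r"
      using False r by (auto simp: u_def dist_norm)
    then have "norm (F i (x0 + u)) \<le> k" "norm (F i x0) \<le> k" using k by blast+
    moreover have "F i u = F i (x0 + u) - F i x0"
      using linear_simps[OF lin[of i]] by simp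
    ultimately have "norm (F i u) \<le> 2 * k"
      by (metis norm_triangle_ineq4 order_trans add_mono mult_2)
    moreover have "F i u = (r / 2 / norm x) *\<^sub>R F i x"
      using linear_simps[OF lin[of i]] by (simp add: u_def)
    ultimately have "r * norm (F i x) \<le> 4 * k * norm x"
      using r False by (simp add: field_simps)
    then show ?thesis using r False by (simp add: field_simps)
  qed
  moreover have "4 * k / r \<ge> 0" using r \<open>k \<ge> 0\<close> by simp
  ultimately show ?thesis by blast
qed

text \<open>Partial functionals are encoded by their graphs, so that Zorn's lemma can act on
  set inclusion.\<close>
definition norming_graph :: "'a::real_normed_vector \<Rightarrow> ('a \<times> real) set \<Rightarrow> bool" where
  "norming_graph z G \<longleftrightarrow>
    (\<forall>x y1 y2. (x, y1) \<in> G \<longrightarrow> (x, y2) \<in> G \<longrightarrow> y1 = y2) \<and>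
    (\<forall>x y u v. (x, y) \<in> G \<longrightarrow> (u, v) \<in> G \<longrightarrow> (x + u, y + v) \<in> G) \<and>
    (\<forall>x y c. (x, y) \<in> G \<longrightarrow> (c *\<^sub>R x, c * y) \<in> G) \<and>
    (\<forall>x y. (x, y) \<in> G \<longrightarrow> y \<le> norm x) \<and>
    (z, norm z) \<in> G"

lemma norming_graphD:
  assumes "norming_graph z G"
  shows norming_graph_single_valued: "(x, y1) \<in> G \<Longrightarrow> (x, y2) \<in> G \<Longrightarrow> y1 = y2"
    and norming_graph_add: "(x, y) \<in> G \<Longrightarrow> (u, v) \<in> G \<Longrightarrow> (x + u, y + v) \<in> G"
    and norming_graph_scale: "(x, y) \<in> G \<Longrightarrow> (c *\<^sub>R x, c * y) \<in> G"
    and norming_graph_dominated: "(x, y) \<in> G \<Longrightarrow> y \<le> norm x"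
    and norming_graph_norming: "(z, norm z) \<in> G"
  using assms unfolding norming_graph_def by blast+

lemma norming_graph_extension_bounds:
  assumes G: "norming_graph z G"
  obtains c where "\<And>x y. (x, y) \<in> G \<Longrightarrow> y - norm (x - w) \<le> c"
    "\<And>x y. (x, y) \<in> G \<Longrightarrow> c \<le> norm (x + w) - y"
proof -
  define S where "S = {y - norm (x - w) | x y. (x, y) \<in> G}"
  have gap: "y1 - norm (x1 - w) \<le> norm (x2 + w) - y2" if "(x1, y1) \<in> G" "(x2, y2) \<in> G"
    for x1 y1 x2 y2
  proof -
    have "y1 + y2 \<le> norm (x1 + x2)"
      using norming_graph_dominated[OF G norming_graph_add[OF G that]] .
    also have "\<dots> \<le> norm (x1 - w) + norm (x2 + w)"
      using norm_triangle_ineq[of "x1 - w" "x2 + w"] by simp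
    finally show ?thesis by simp
  qed
  have "S \<noteq> {}" "bdd_above S"
    using norming_graph_norming[OF G] gap[OF _ norming_graph_norming[OF G]]
    unfolding S_def bdd_above_def by blast+
  then show ?thesis
    using that[of "Sup S"] gap unfolding S_def by (blast intro: cSup_upper cSup_least)
qed

lemma norming_graph_extension_value:
  assumes G: "norming_graph z G"
  obtains c where "\<And>x y t. (x, y) \<in> G \<Longrightarrow> y + t * c \<le> norm (x + t *\<^sub>R w)"
proof -
  note scale = norming_graph_scale[OF G]
  obtain c where c_lower: "\<And>x y. (x, y) \<in> G \<Longrightarrow> y - norm (x - w) \<le> c"
    and c_upper: "\<And>x y. (x, y) \<in> G \<Longrightarrow> c \<le> norm (x + w) - y"
    using norming_graph_extension_bounds[OF G] by blast
  have "y + t * c \<le> norm (x + t *\<^sub>R w)" if "(x, y) \<in> G" for x y t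
  proof -
    consider "t = 0" | "t > 0" | "t < 0" by linarith
    then show ?thesis
    proof cases
      case 1
      then show ?thesis using norming_graph_dominated[OF G that] by simp
    next
      case 2
      have "c \<le> norm ((1 / t) *\<^sub>R x + w) - (1 / t) * y"
        using c_upper[OF scale[OF that]] .
      then have "t * c \<le> t * (norm ((1 / t) *\<^sub>R x + w) - (1 / t) * y)"
        using 2 by simp
      also have "\<dots> = norm (t *\<^sub>R ((1 / t) *\<^sub>R x + w)) - y"
        using 2 by (simp add: right_diff_distrib)
      finally show ?thesis using 2 by (simp add: algebra_simps)
    next
      case 3
      have "(1 / (-t)) * y - norm ((1 / (-t)) *\<^sub>R x - w) \<le> c"
        using c_lower[OF scale[OF that]] .
      then have "(-t) * ((1 / (-t)) * y - norm ((1 / (-t)) *\<^sub>R x - w)) \<le> (-t) * c"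
        using 3 by (intro mult_left_mono) auto
      moreover have "(-t) * norm ((1 / (-t)) *\<^sub>R x - w) = norm ((-t) *\<^sub>R ((1 / (-t)) *\<^sub>R x - w))"
        using 3 by simp
      ultimately show ?thesis using 3 by (simp add: algebra_simps)
    qed
  qed
  then show ?thesis by (rule that)
qed

lemma norming_graph_decomposition_unique:
  assumes G: "norming_graph z G" and w: "w \<notin> fst ` G"
    and "(x1, y1) \<in> G" "(x2, y2) \<in> G" "x1 + t1 *\<^sub>R w = x2 + t2 *\<^sub>R w"
  shows "t1 = t2 \<and> x1 = x2"
proof (rule ccontr)
  assume "\<not> ?thesis"
  then have "t1 \<noteq> t2" using assms(5) by auto
  have "(x1 - x2, y1 - y2) \<in> G"
    using norming_graph_add[OF G assms(3) norming_graph_scale[OF G assms(4), of "-1"]] by simp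
  moreover have "x1 - x2 = (t2 - t1) *\<^sub>R w" using assms(5) by (simp add: algebra_simps)
  ultimately have "(w, (y1 - y2) / (t2 - t1)) \<in> G"
    using norming_graph_scale[OF G, of "x1 - x2" "y1 - y2" "1 / (t2 - t1)"] \<open>t1 \<noteq> t2\<close> by simp
  then show False using w by force
qed

lemma norming_graph_extend:
  assumes G: "norming_graph z G" and w: "w \<notin> fst ` G"
  shows "\<exists>G'. norming_graph z G' \<and> G \<subset> G'"
proof -
  note add = norming_graph_add[OF G] and scale = norming_graph_scale[OF G]
  obtain c where extended_dominated: "\<And>x y t. (x, y) \<in> G \<Longrightarrow> y + t * c \<le> norm (x + t *\<^sub>R w)"
    using norming_graph_extension_value[OF G] by blast
  define G' where "G' = {(x + t *\<^sub>R w, y + t * c) | x y t. (x, y) \<in> G}"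
  have "(0, 0) \<in> G" using scale[OF norming_graph_norming[OF G], of 0] by simp
  then have "(w, c) \<in> G'" unfolding G'_def by force
  then have "G \<subset> G'" using w unfolding G'_def by force
  have "norming_graph z G'"
    unfolding norming_graph_def
  proof (intro conjI allI impI)
    fix x y1 y2 assume "(x, y1) \<in> G'" "(x, y2) \<in> G'"
    then obtain x1 y1' t1 x2 y2' t2 where xy: "(x1, y1') \<in> G" "(x2, y2') \<in> G"
      "x = x1 + t1 *\<^sub>R w" "y1 = y1' + t1 * c" "x = x2 + t2 *\<^sub>R w" "y2 = y2' + t2 * c"
      unfolding G'_def by blast
    then have "t1 = t2 \<and> x1 = x2"
      by (intro norming_graph_decomposition_unique[OF G w xy(1,2)]) simp
    then show "y1 = y2" using xy norming_graph_single_valued[OF G] by blast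
  next
    fix x y u v assume "(x, y) \<in> G'" "(u, v) \<in> G'"
    then obtain x1 y1 t1 x2 y2 t2 where "(x1, y1) \<in> G" "(x2, y2) \<in> G"
      "x = x1 + t1 *\<^sub>R w" "y = y1 + t1 * c" "u = x2 + t2 *\<^sub>R w" "v = y2 + t2 * c"
      unfolding G'_def by blast
    then show "(x + u, y + v) \<in> G'" unfolding G'_def
      by (intro CollectI exI[of _ "x1 + x2"] exI[of _ "y1 + y2"] exI[of _ "t1 + t2"])
        (auto simp: add algebra_simps)
  next
    fix x y a assume "(x, y) \<in> G'"
    then obtain x1 y1 t where "(x1, y1) \<in> G" "x = x1 + t *\<^sub>R w" "y = y1 + t * c"
      unfolding G'_def by blast
    then show "(a *\<^sub>R x, a * y) \<in> G'" unfolding G'_def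
      by (intro CollectI exI[of _ "a *\<^sub>R x1"] exI[of _ "a * y1"] exI[of _ "a * t"])
        (auto simp: scale algebra_simps)
  next
    fix x y assume "(x, y) \<in> G'"
    then show "y \<le> norm x" unfolding G'_def using extended_dominated by blast
  next
    show "(z, norm z) \<in> G'" using \<open>G \<subset> G'\<close> norming_graph_norming[OF G] by blast
  qed
  with \<open>G \<subset> G'\<close> show ?thesis by blast
qed

lemma norming_graph_Union_chain:
  assumes "C \<noteq> {}" and chain: "chain\<^sub>\<subseteq> C" and G: "\<And>G. G \<in> C \<Longrightarrow> norming_graph z G"
  shows "norming_graph z (\<Union>C)"
  unfolding norming_graph_def
proof (intro conjI allI impI)
  fix x y1 y2 assume "(x, y1) \<in> \<Union>C" "(x, y2) \<in> \<Union>C"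
  then obtain X Y where XY: "X \<in> C" "Y \<in> C" "(x, y1) \<in> X" "(x, y2) \<in> Y" by blast
  then consider "X \<subseteq> Y" | "Y \<subseteq> X" using chain unfolding chain_subset_def by blast
  then show "y1 = y2"
  proof cases
    case 1
    then show ?thesis using XY norming_graph_single_valued[OF G[OF XY(2)]] by blast
  next
    case 2
    then show ?thesis using XY norming_graph_single_valued[OF G[OF XY(1)]] by blast
  qed
next
  fix x y u v assume "(x, y) \<in> \<Union>C" "(u, v) \<in> \<Union>C"
  then obtain X Y where XY: "X \<in> C" "Y \<in> C" "(x, y) \<in> X" "(u, v) \<in> Y" by blast
  then consider "X \<subseteq> Y" | "Y \<subseteq> X" using chain unfolding chain_subset_def by blast
  then show "(x + u, y + v) \<in> \<Union>C"
  proof cases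
    case 1
    then show ?thesis using XY norming_graph_add[OF G[OF XY(2)]] by blast
  next
    case 2
    then show ?thesis using XY norming_graph_add[OF G[OF XY(1)]] by blast
  qed
next
  fix x y c assume "(x, y) \<in> \<Union>C"
  then show "(c *\<^sub>R x, c * y) \<in> \<Union>C" using norming_graph_scale[OF G] by blast
next
  fix x y assume "(x, y) \<in> \<Union>C"
  then show "y \<le> norm x" using norming_graph_dominated[OF G] by blast
next
  show "(z, norm z) \<in> \<Union>C" using assms(1) norming_graph_norming[OF G] by blast
qed

lemma norming_graph_span:
  "norming_graph z {(t *\<^sub>R z, t * norm z) | t. True}"
  unfolding norming_graph_def
proof (intro conjI allI impI)
  fix x y1 y2 assume "(x, y1) \<in> {(t *\<^sub>R z, t * norm z) | t. True}"
    "(x, y2) \<in> {(t *\<^sub>R z, t * norm z) | t. True}"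
  then obtain t1 t2 where "x = t1 *\<^sub>R z" "y1 = t1 * norm z" "x = t2 *\<^sub>R z" "y2 = t2 * norm z"
    by blast
  then show "y1 = y2" by (cases "z = 0") auto
next
  fix x y u v assume "(x, y) \<in> {(t *\<^sub>R z, t * norm z) | t. True}"
    "(u, v) \<in> {(t *\<^sub>R z, t * norm z) | t. True}"
  then obtain t1 t2 where "x = t1 *\<^sub>R z" "y = t1 * norm z" "u = t2 *\<^sub>R z" "v = t2 * norm z"
    by blast
  then show "(x + u, y + v) \<in> {(t *\<^sub>R z, t * norm z) | t. True}"
    by (intro CollectI exI[of _ "t1 + t2"]) (simp add: algebra_simps)
next
  fix x y c assume "(x, y) \<in> {(t *\<^sub>R z, t * norm z) | t. True}"
  then obtain t where "x = t *\<^sub>R z" "y = t * norm z" by blast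
  then show "(c *\<^sub>R x, c * y) \<in> {(t *\<^sub>R z, t * norm z) | t. True}"
    by (intro CollectI exI[of _ "c * t"]) simp
next
  fix x y assume "(x, y) \<in> {(t *\<^sub>R z, t * norm z) | t. True}"
  then show "y \<le> norm x" by (auto simp: mult_right_mono)
qed (intro CollectI exI[of _ 1], simp)

lemma exists_total_norming_graph:
  obtains G where "norming_graph z G" "fst ` G = UNIV"
proof -
  define A where "A = {G. norming_graph z G}"
  have "\<forall>C\<in>chains A. \<exists>U\<in>A. \<forall>X\<in>C. X \<subseteq> U"
  proof
    fix C assume C: "C \<in> chains A"
    show "\<exists>U\<in>A. \<forall>X\<in>C. X \<subseteq> U"
    proof (cases "C = {}")
      case True
      then show ?thesis using norming_graph_span A_def by blast
    next
      case False
      then have "\<Union>C \<in> A"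
        using C norming_graph_Union_chain unfolding A_def chains_def by blast
      then show ?thesis by blast
    qed
  qed
  from Zorn_Lemma2[OF this] obtain G where "norming_graph z G"
    and maximal: "\<And>G'. norming_graph z G' \<Longrightarrow> G \<subseteq> G' \<Longrightarrow> G' = G"
    unfolding A_def by blast
  moreover have "x \<in> fst ` G" for x
  proof (rule ccontr)
    assume "x \<notin> fst ` G"
    from norming_graph_extend[OF \<open>norming_graph z G\<close> this] maximal show False by blast
  qed
  ultimately show ?thesis using that by blast
qed

lemma exists_norming_functional:
  fixes z :: "'a::real_normed_vector"
  obtains f where "bounded_linear f" "\<And>x. \<bar>f x\<bar> \<le> norm x" "f z = norm z"
proof -
  obtain G where G: "norming_graph z G" and total: "fst ` G = UNIV"
    by (rule exists_total_norming_graph)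
  note single_valued = norming_graph_single_valued[OF G]
    and scale = norming_graph_scale[OF G] and dominated = norming_graph_dominated[OF G]
  define f where "f x = (THE y. (x, y) \<in> G)" for x
  have graph: "(x, f x) \<in> G" for x
  proof -
    obtain y where "(x, y) \<in> G" using total by force
    then show ?thesis unfolding f_def by (metis (mono_tags) single_valued theI)
  qed
  have f_eq: "(x, y) \<in> G \<Longrightarrow> f x = y" for x y using single_valued graph by blast
  have "\<bar>f x\<bar> \<le> norm x" for x
    using dominated[OF graph[of x]] dominated[OF graph[of "-x"]] f_eq[OF scale[OF graph[of x], of "-1"]]
    by simp
  moreover have "bounded_linear f"
    by (rule bounded_linear_intro[of _ 1])
      (auto simp: f_eq[OF norming_graph_add[OF G graph graph]] f_eq[OF scale[OF graph]] calculation)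
  ultimately show ?thesis using that f_eq[OF norming_graph_norming[OF G]] by blast
qed

lemma norm_le_if_dual_bounded:
  fixes v :: "'a::real_normed_vector"
  assumes "C \<ge> 0" and dual_bound: "\<And>\<phi> :: ('a \<Rightarrow>\<^sub>L real). \<bar>blinfun_apply \<phi> v\<bar> \<le> C * norm \<phi>"
  shows "norm v \<le> C"
proof -
  obtain g where g: "bounded_linear g" "\<And>x. \<bar>g x\<bar> \<le> norm x" "g v = norm v"
    using exists_norming_functional by blast
  have apply_g: "blinfun_apply (Blinfun g) = g"
    by (rule bounded_linear_Blinfun_apply[OF g(1)])
  have "norm (Blinfun g) \<le> 1"
    by (rule norm_blinfun_bound) (use g(2) apply_g in auto)
  have "norm v \<le> \<bar>blinfun_apply (Blinfun g) v\<bar>" using apply_g g(3) by simp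
  also have "\<dots> \<le> C * norm (Blinfun g)" by (rule dual_bound)
  also have "\<dots> \<le> C" using \<open>norm (Blinfun g) \<le> 1\<close> \<open>C \<ge> 0\<close> by (simp add: mult_left_le)
  finally show ?thesis .
qed

section \<open>Complexified functionals and equivalent norms\<close>

lemma scaleC_zero_left [simp]: "scaleC 0 (x::'a::complex_banach) = 0"
  using scaleC_of_real[of 0 x] by simp

lemma scaleC_zero_right [simp]: "scaleC c (0::'a::complex_banach) = 0"
  using scaleC_add_right[of c 0 0] by simp

lemma scaleC_diff_right: "scaleC c ((x::'a::complex_banach) - y) = scaleC c x - scaleC c y"
  using scaleC_add_right[of c "x - y" y] by (simp add: eq_diff_eq)

lemma scaleC_scaleR: "scaleC c (r *\<^sub>R (x::'a::complex_banach)) = r *\<^sub>R scaleC c x"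
  by (metis scaleC_of_real scaleC_scaleC mult.commute)

lemma scaleC_Complex: "scaleC (Complex a b) (x::'a::complex_banach) = a *\<^sub>R x + b *\<^sub>R scaleC \<i> x"
proof -
  have "scaleC (Complex a b) x = scaleC (complex_of_real a) x + scaleC (\<i> * complex_of_real b) x"
    by (simp add: Complex_eq scaleC_add_left)
  also have "scaleC (\<i> * complex_of_real b) x = scaleC \<i> (b *\<^sub>R x)"
    by (simp add: scaleC_scaleC scaleC_of_real[symmetric])
  finally show ?thesis by (simp add: scaleC_of_real scaleC_scaleR)
qed

lemma scaleC_ii: "scaleC \<i> (scaleC \<i> (x::'a::complex_banach)) = - x"
  using scaleC_scaleC[of \<i> \<i> x] scaleC_of_real[of "-1" x] by simp

lemma bounded_linear_scaleC: "bounded_linear (scaleC c :: 'a::complex_banach \<Rightarrow> 'a)"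
  by (rule bounded_linear_intro[of _ "cmod c"]) (auto simp: scaleC_add_right scaleC_scaleR norm_scaleC)

definition complexify :: "('a::complex_banach \<Rightarrow> real) \<Rightarrow> 'a \<Rightarrow> complex" where
  "complexify f x = Complex (f x) (- f (scaleC \<i> x))"

context
  fixes f :: "'a::complex_banach \<Rightarrow> real"
  assumes f: "bounded_linear f"
begin

lemma Re_complexify [simp]: "Re (complexify f x) = f x"
  by (simp add: complexify_def)

lemma complexify_add: "complexify f (x + y) = complexify f x + complexify f y"
  using linear_simps[OF f] by (simp add: complexify_def scaleC_add_right complex_eq_iff)

lemma complexify_diff: "complexify f (x - y) = complexify f x - complexify f y"
  using linear_simps[OF f] by (simp add: complexify_def scaleC_diff_right complex_eq_iff)

lemma complexify_scaleC: "complexify f (scaleC c x) = c * complexify f x"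
proof (cases c)
  case (Complex a b)
  have "f (scaleC c x) = a * f x + b * f (scaleC \<i> x)"
    unfolding Complex scaleC_Complex using linear_simps[OF f] by simp
  moreover have "scaleC \<i> (scaleC c x) = a *\<^sub>R scaleC \<i> x - b *\<^sub>R x"
    unfolding Complex scaleC_Complex by (simp add: scaleC_add_right scaleC_scaleR scaleC_ii)
  then have "f (scaleC \<i> (scaleC c x)) = a * f (scaleC \<i> x) - b * f x"
    using linear_simps[OF f] by simp
  ultimately show ?thesis by (simp add: complexify_def Complex complex_eq_iff algebra_simps)
qed

lemma norm_complexify_le: "cmod (complexify f x) \<le> 2 * onorm f * norm x"
proof -
  have "cmod (complexify f x) \<le> \<bar>f x\<bar> + \<bar>f (scaleC \<i> x)\<bar>"
    using cmod_le[of "complexify f x"] by (simp add: complexify_def)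
  also have "\<dots> \<le> onorm f * norm x + onorm f * norm (scaleC \<i> x)"
    using onorm[OF f] by (intro add_mono) (metis real_norm_def)+
  finally show ?thesis by (simp add: norm_scaleC)
qed

end

lemma cnorm_zero: "is_cnorm n \<Longrightarrow> n 0 = 0"
  unfolding is_cnorm_def using scaleC_zero_left[of 0] by (metis mult_zero_left norm_zero)

lemma cnorm_scaleR: "is_cnorm n \<Longrightarrow> n (r *\<^sub>R x) = \<bar>r\<bar> * n x"
  unfolding is_cnorm_def using scaleC_of_real[of r x] by (metis norm_of_real)

lemma cnorm_nonneg:
  assumes "is_cnorm n"
  shows "0 \<le> n x"
proof -
  have "0 = n (x + (-1) *\<^sub>R x)" using cnorm_zero[OF assms] by simp
  also have "\<dots> \<le> n x + n ((-1) *\<^sub>R x)" using assms unfolding is_cnorm_def by blast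
  also have "\<dots> = 2 * n x" using cnorm_scaleR[OF assms, of "-1" x] by simp
  finally show ?thesis by simp
qed

lemma equiv_normE:
  assumes "equiv_norm n"
  obtains a b where "is_cnorm n" "a > 0" "b > 0" "\<And>x. a * norm x \<le> n x" "\<And>x. n x \<le> b * norm x"
  using assms unfolding equiv_norm_def by blast

lemma opnorm_wrt_le:
  assumes "is_cnorm n" "c \<ge> 0" "\<And>x. n (L x) \<le> c * n x"
  shows "opnorm_wrt n L \<le> c"
  unfolding opnorm_wrt_def
proof (rule cSup_least)
  show "(\<lambda>x. n (L x)) ` {x. n x \<le> 1} \<noteq> {}"
  proof -
    have "0 \<in> {x. n x \<le> 1}" using cnorm_zero[OF assms(1)] by simp
    then show ?thesis by blast
  qed
next
  fix v assume "v \<in> (\<lambda>x. n (L x)) ` {x. n x \<le> 1}"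
  then obtain x where "n x \<le> 1" "v = n (L x)" by blast
  moreover have "c * n x \<le> c" using \<open>n x \<le> 1\<close> assms(2) by (simp add: mult_left_le)
  ultimately show "v \<le> c" using assms(3)[of x] by linarith
qed

lemma le_opnorm_wrt:
  assumes "equiv_norm n" "bounded_linear L"
  shows "n (L x) \<le> opnorm_wrt n L * n x"
proof -
  obtain a b where n: "is_cnorm n" "a > 0" "b > 0" "\<And>x. a * norm x \<le> n x" "\<And>x. n x \<le> b * norm x"
    using equiv_normE[OF assms(1)] by blast
  have "bdd_above ((\<lambda>x. n (L x)) ` {x. n x \<le> 1})"
  proof -
    have "n (L x) \<le> b * (onorm L * (1 / a))" if "n x \<le> 1" for x
    proof -
      have "norm x \<le> 1 / a" using n(4)[of x] that n(2) by (simp add: field_simps)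
      have "n (L x) \<le> b * norm (L x)" by (rule n(5))
      also have "\<dots> \<le> b * (onorm L * norm x)"
        using onorm[OF assms(2)] n(3) by (intro mult_left_mono) auto
      also have "\<dots> \<le> b * (onorm L * (1 / a))"
        using \<open>norm x \<le> 1 / a\<close> onorm_pos_le[OF assms(2)] n(3) by (intro mult_left_mono) auto
      finally show ?thesis .
    qed
    then show ?thesis unfolding bdd_above_def by blast
  qed
  show ?thesis
  proof (cases "x = 0")
    case True
    then show ?thesis using n(1) linear_simps(3)[OF assms(2)] by (simp add: cnorm_zero)
  next
    case False
    then have "a * norm x > 0" using n(2) by simp
    then have nx: "n x > 0" using n(4)[of x] by linarith
    have "n (L ((1 / n x) *\<^sub>R x)) \<le> opnorm_wrt n L"
      unfolding opnorm_wrt_def using \<open>bdd_above _\<close> nx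
      by (intro cSup_upper) (auto simp: cnorm_scaleR[OF n(1)])
    then show ?thesis
      using nx linear_simps(5)[OF assms(2)] by (simp add: cnorm_scaleR[OF n(1)] field_simps)
  qed
qed

definition functional_max_norm :: "real \<Rightarrow> ('a::complex_banach \<Rightarrow> real) \<Rightarrow> 'a \<Rightarrow> real" where
  "functional_max_norm K f x = max (norm x) (K * cmod (complexify f x))"

lemma is_cnorm_functional_max_norm:
  assumes f: "bounded_linear f" and "K \<ge> 0"
  shows "is_cnorm (functional_max_norm K f)"
  unfolding is_cnorm_def functional_max_norm_def
proof (intro conjI allI impI)
  fix x y
  have "K * cmod (complexify f (x + y)) \<le> K * cmod (complexify f x) + K * cmod (complexify f y)"
    using \<open>K \<ge> 0\<close> by (simp add: complexify_add[OF f] norm_triangle_ineq mult_left_mono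
        flip: distrib_left)
  then show "max (norm (x + y)) (K * cmod (complexify f (x + y)))
      \<le> max (norm x) (K * cmod (complexify f x)) + max (norm y) (K * cmod (complexify f y))"
    using norm_triangle_ineq[of x y] by linarith
next
  fix c x
  show "max (norm (scaleC c x)) (K * cmod (complexify f (scaleC c x)))
      = cmod c * max (norm x) (K * cmod (complexify f x))"
    by (simp add: norm_scaleC complexify_scaleC[OF f] norm_mult max_mult_distrib_left
        mult.left_commute)
next
  fix x assume "max (norm x) (K * cmod (complexify f x)) = 0"
  then have "norm x \<le> 0" by (metis max.cobounded1)
  then show "x = 0" by simp
qed

lemma equiv_norm_functional_max_norm:
  assumes f: "bounded_linear f" and "K \<ge> 0"
  shows "equiv_norm (functional_max_norm K f)"
proof -
  define B where "B = 1 + 2 * K * onorm f"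
  have "B > 0" using \<open>K \<ge> 0\<close> onorm_pos_le[OF f] by (simp add: B_def add_pos_nonneg)
  moreover have "functional_max_norm K f x \<le> B * norm x" for x
  proof -
    have "K * cmod (complexify f x) \<le> K * (2 * onorm f * norm x)"
      using \<open>K \<ge> 0\<close> norm_complexify_le[OF f] by (intro mult_left_mono)
    moreover have "0 \<le> K * (2 * onorm f * norm x)" using \<open>K \<ge> 0\<close> onorm_pos_le[OF f] by simp
    moreover have "B * norm x = norm x + K * (2 * onorm f * norm x)"
      by (simp add: B_def algebra_simps)
    ultimately show ?thesis
      unfolding functional_max_norm_def using norm_ge_zero[of x] by (intro max.boundedI) linarith+
  qed
  moreover have "1 * norm x \<le> functional_max_norm K f x" for x
    by (simp add: functional_max_norm_def)
  ultimately show ?thesis using is_cnorm_functional_max_norm[OF assms]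
    unfolding equiv_norm_def by (intro conjI exI[of _ 1] exI[of _ B]) simp_all
qed

section \<open>Strongly continuous semigroups and their generators\<close>

lemma tendsto_right_difference_quotient:
  fixes f :: "real \<Rightarrow> 'b::real_normed_vector"
  assumes "(f has_vector_derivative v) (at x within {x..b})" "x < b"
  shows "((\<lambda>h. (1 / h) *\<^sub>R (f (x + h) - f x)) \<longlongrightarrow> v) (at_right 0)"
proof -
  have "((\<lambda>y. (1 / norm (y - x)) *\<^sub>R (f y - (f x + (y - x) *\<^sub>R v))) \<longlongrightarrow> 0) (at_right x)"
    using assms unfolding has_vector_derivative_def has_derivative_within
      at_within_Icc_at_right[OF assms(2)]
    by blast
  then have "((\<lambda>h. (1 / norm (h + x - x)) *\<^sub>R (f (h + x) - (f x + (h + x - x) *\<^sub>R v))) \<longlongrightarrow> 0)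
      (at_right 0)"
    unfolding at_right_to_0[of x] by (simp add: filterlim_filtermap)
  then have "((\<lambda>h. (1 / norm (h + x - x)) *\<^sub>R (f (h + x) - (f x + (h + x - x) *\<^sub>R v)) + v)
      \<longlongrightarrow> 0 + v) (at_right 0)"
    by (intro tendsto_add tendsto_const)
  moreover have "\<forall>\<^sub>F h in at_right 0.
      (1 / norm (h + x - x)) *\<^sub>R (f (h + x) - (f x + (h + x - x) *\<^sub>R v)) + v
      = (1 / h) *\<^sub>R (f (x + h) - f x)"
    unfolding eventually_at_right_field by (intro exI[of _ 1]) (auto simp: algebra_simps)
  ultimately show ?thesis by (simp add: tendsto_cong)
qed

locale strongly_continuous_semigroup =
  fixes T :: "real \<Rightarrow> 'a::complex_banach \<Rightarrow> 'a"
  assumes c0: "c0_semigroup T"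
begin

lemma bounded_linear_T: "t \<ge> 0 \<Longrightarrow> bounded_linear (T t)"
  using c0 unfolding c0_semigroup_def bounded_clinear_op_def by blast

lemma T_scaleC: "t \<ge> 0 \<Longrightarrow> T t (scaleC c x) = scaleC c (T t x)"
  using c0 unfolding c0_semigroup_def bounded_clinear_op_def by blast

lemma T_0 [simp]: "T 0 x = x"
  using c0 unfolding c0_semigroup_def by simp

lemma T_add_time: "s \<ge> 0 \<Longrightarrow> t \<ge> 0 \<Longrightarrow> T (s + t) x = T s (T t x)"
  using c0 unfolding c0_semigroup_def by (metis comp_apply)

lemma tendsto_T_0: "((\<lambda>t. T t x) \<longlongrightarrow> x) (at_right 0)"
  using c0 unfolding c0_semigroup_def by blast

lemma T_add: "t \<ge> 0 \<Longrightarrow> T t (x + y) = T t x + T t y"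
  and T_diff: "t \<ge> 0 \<Longrightarrow> T t (x - y) = T t x - T t y"
  and T_scaleR: "t \<ge> 0 \<Longrightarrow> T t (r *\<^sub>R x) = r *\<^sub>R T t x"
  and T_zero: "t \<ge> 0 \<Longrightarrow> T t 0 = 0"
  using bounded_linear_T linear_simps by blast+

lemma exists_local_bound: "\<exists>\<delta>>0. \<exists>M\<ge>1. \<forall>t\<in>{0..\<delta>}. \<forall>x. norm (T t x) \<le> M * norm x"
proof (rule ccontr)
  assume contra: "\<not> ?thesis"
  have "\<exists>t. t \<in> {0<..1 / (real n + 1)} \<and> (\<exists>x. norm (T t x) > (real n + 1) * norm x)"
    for n :: nat
  proof -
    obtain t x where "t \<in> {0..1 / (real n + 1)}" "norm (T t x) > (real n + 1) * norm x"
      using contra[simplified, rule_format, of "1 / (real n + 1)" "real n + 1"]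
      by (auto simp: not_le)
    moreover have "norm x \<le> (real n + 1) * norm x" by (simp add: mult_le_cancel_right1)
    then have "t \<noteq> 0" using calculation(2) by auto
    ultimately show ?thesis by (intro exI[of _ t]) auto
  qed
  then obtain t where t: "\<And>n. t n \<in> {0<..1 / (real n + 1)}"
    and unbounded: "\<And>n. \<exists>x. norm (T (t n) x) > (real n + 1) * norm x"
    by metis
  have "t \<longlonglongrightarrow> 0"
  proof (rule tendsto_sandwich[of "\<lambda>_. 0" _ _ "\<lambda>n. 1 / (real n + 1)"])
    show "(\<lambda>n. 1 / (real n + 1)) \<longlonglongrightarrow> 0"
      using LIMSEQ_inverse_real_of_nat by (simp add: inverse_eq_divide add.commute)
  qed (use t in \<open>auto simp: less_imp_le\<close>)
  moreover have "\<forall>\<^sub>F n in sequentially. t n \<in> {0<..}" using t by auto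
  ultimately have "filterlim t (at_right 0) sequentially"
    by (simp add: filterlim_at eventually_mono)
  then have "(\<lambda>n. T (t n) x) \<longlonglongrightarrow> x" for x
    using filterlim_compose[OF tendsto_T_0] by blast
  then have "\<exists>B. \<forall>n. norm (T (t n) x) \<le> B" for x
    by (meson Bseq_def convergentI convergent_imp_Bseq less_imp_le)
  moreover have "bounded_linear (T (t n))" for n using t bounded_linear_T by (simp add: less_imp_le)
  ultimately have "\<exists>C\<ge>0. \<forall>n x. norm (T (t n) x) \<le> C * norm x"
    by (intro uniform_boundedness)
  then obtain C where C: "\<And>n x. norm (T (t n) x) \<le> C * norm x" by blast
  obtain n :: nat where "real n \<ge> C" using real_arch_simple by blast
  moreover obtain x where "norm (T (t n) x) > (real n + 1) * norm x" using unbounded by blast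
  moreover have "C * norm x \<le> real n * norm x" using \<open>real n \<ge> C\<close> by (intro mult_right_mono) auto
  ultimately show False using C[of n x] norm_ge_zero[of x] by (simp add: algebra_simps)
qed

abbreviation diff_quot :: "'a \<Rightarrow> real \<Rightarrow> 'a" where
  "diff_quot x h \<equiv> (1 / h) *\<^sub>R (T h x - x)"

lemma tendsto_generator: "x \<in> gen_dom T \<Longrightarrow> ((\<lambda>h. diff_quot x h) \<longlongrightarrow> generator T x) (at_right 0)"
  unfolding gen_dom_def generator_def
  by (auto intro: tendsto_Lim[THEN sym, THEN subst] simp: trivial_limit_at_right_real)

lemma generatorI:
  "((\<lambda>h. diff_quot x h) \<longlongrightarrow> y) (at_right 0) \<Longrightarrow> x \<in> gen_dom T \<and> generator T x = y"
  unfolding gen_dom_def generator_def using tendsto_Lim trivial_limit_at_right_real by blast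

lemma generator_zero: "0 \<in> gen_dom T \<and> generator T 0 = 0"
proof (rule generatorI)
  have "\<forall>\<^sub>F h in at_right 0. 0 = diff_quot 0 h"
    using eventually_at_right_less by eventually_elim (simp add: T_zero)
  then show "((\<lambda>h. diff_quot 0 h) \<longlongrightarrow> 0) (at_right 0)"
    by (rule Lim_transform_eventually[OF tendsto_const])
qed

lemma generator_add:
  assumes "x \<in> gen_dom T" "y \<in> gen_dom T"
  shows "x + y \<in> gen_dom T \<and> generator T (x + y) = generator T x + generator T y"
proof (rule generatorI)
  have "((\<lambda>h. diff_quot x h + diff_quot y h) \<longlongrightarrow> generator T x + generator T y) (at_right 0)"
    by (intro tendsto_add tendsto_generator assms)
  moreover have "\<forall>\<^sub>F h in at_right 0. diff_quot x h + diff_quot y h = diff_quot (x + y) h"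
    using eventually_at_right_less by eventually_elim (simp add: T_add algebra_simps)
  ultimately show "((\<lambda>h. diff_quot (x + y) h) \<longlongrightarrow> generator T x + generator T y) (at_right 0)"
    by (rule Lim_transform_eventually)
qed

lemma generator_scaleC:
  assumes "x \<in> gen_dom T"
  shows "scaleC c x \<in> gen_dom T \<and> generator T (scaleC c x) = scaleC c (generator T x)"
proof (rule generatorI)
  have "((\<lambda>h. scaleC c (diff_quot x h)) \<longlongrightarrow> scaleC c (generator T x)) (at_right 0)"
    by (intro bounded_linear.tendsto[OF bounded_linear_scaleC] tendsto_generator assms)
  moreover have "\<forall>\<^sub>F h in at_right 0. scaleC c (diff_quot x h) = diff_quot (scaleC c x) h"
    using eventually_at_right_less
    by eventually_elim (simp add: T_scaleC scaleC_scaleR scaleC_diff_right)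
  ultimately show "((\<lambda>h. diff_quot (scaleC c x) h) \<longlongrightarrow> scaleC c (generator T x)) (at_right 0)"
    by (rule Lim_transform_eventually)
qed

lemma generator_scaleR:
  assumes "x \<in> gen_dom T"
  shows "r *\<^sub>R x \<in> gen_dom T \<and> generator T (r *\<^sub>R x) = r *\<^sub>R generator T x"
  using generator_scaleC[OF assms, of "complex_of_real r"] by (simp add: scaleC_of_real)

lemma generator_diff:
  assumes "x \<in> gen_dom T" "y \<in> gen_dom T"
  shows "x - y \<in> gen_dom T \<and> generator T (x - y) = generator T x - generator T y"
  using generator_add[OF assms(1), of "(-1) *\<^sub>R y"] generator_scaleR[OF assms(2), of "-1"] by simp

lemma exists_time_above_exp:
  assumes f: "bounded_linear f" and x: "x \<in> gen_dom T" "f x = 1" and l: "f (generator T x) > l"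
  shows "\<exists>h>0. f (T h x) > exp (l * h)"
proof -
  have "((\<lambda>h. f (diff_quot x h)) \<longlongrightarrow> f (generator T x)) (at_right 0)"
    using bounded_linear.tendsto[OF f tendsto_generator[OF x(1)]] .
  moreover have "f (diff_quot x h) = (f (T h x) - 1) / h" for h
    using linear_simps[OF f] x(2) by (simp add: divide_inverse mult.commute)
  ultimately have "((\<lambda>h. (f (T h x) - 1) / h) \<longlongrightarrow> f (generator T x)) (at_right 0)"
    by simp
  moreover have "((\<lambda>h. (exp (l * h) - 1) / h) \<longlongrightarrow> l) (at_right 0)"
  proof -
    have "((\<lambda>h. exp (l * h)) has_field_derivative l) (at 0)"
      by (auto intro!: derivative_eq_intros)
    then have "((\<lambda>h. (exp (l * h) - 1) / h) \<longlongrightarrow> l) (at 0)"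
      by (simp add: has_field_derivative_iff)
    then show ?thesis by (rule tendsto_mono[OF at_within_le_at])
  qed
  ultimately have "((\<lambda>h. (f (T h x) - 1) / h - (exp (l * h) - 1) / h) \<longlongrightarrow> f (generator T x) - l)
      (at_right 0)"
    by (rule tendsto_diff)
  then have "\<forall>\<^sub>F h in at_right 0. 0 < (f (T h x) - 1) / h - (exp (l * h) - 1) / h"
    using l by (intro order_tendstoD(1)) auto
  moreover have "\<forall>\<^sub>F h in at_right 0. h > (0::real)" by (simp add: eventually_at_right_less)
  ultimately obtain h where "0 < (f (T h x) - 1) / h - (exp (l * h) - 1) / h" "h > 0"
    using eventually_happens'[OF trivial_limit_at_right_real eventually_conj] by blast
  then show ?thesis by (auto simp: diff_divide_distrib[symmetric] zero_less_divide_iff)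
qed

lemma generator_kernel_projection:
  assumes f: "bounded_linear f" and x0: "x0 \<in> gen_dom T" "complexify f x0 = 1"
    and y1: "y1 \<in> gen_dom T"
  defines "y \<equiv> y1 - scaleC (complexify f y1) x0"
  shows "y \<in> gen_dom T" and "complexify f y = 0"
    and "norm y \<le> norm y1 + cmod (complexify f y1) * norm x0"
    and "cmod (complexify f (generator T y1))
      - cmod (complexify f y1) * cmod (complexify f (generator T x0))
      \<le> cmod (complexify f (generator T y))"
proof -
  have "y \<in> gen_dom T"
    and A_y: "generator T y = generator T y1 - scaleC (complexify f y1) (generator T x0)"
    using generator_diff[OF y1 generator_scaleC[OF x0(1), THEN conjunct1]]
      generator_scaleC[OF x0(1)]
    unfolding y_def by auto
  then show "y \<in> gen_dom T" by blast
  show "complexify f y = 0"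
    by (simp add: y_def complexify_diff[OF f] complexify_scaleC[OF f] x0(2))
  show "norm y \<le> norm y1 + cmod (complexify f y1) * norm x0"
    unfolding y_def using norm_triangle_ineq4[of y1 "scaleC (complexify f y1) x0"]
    by (simp add: norm_scaleC)
  have "complexify f (generator T y)
      = complexify f (generator T y1) - complexify f y1 * complexify f (generator T x0)"
    by (simp add: A_y complexify_diff[OF f] complexify_scaleC[OF f])
  then show "cmod (complexify f (generator T y1))
      - cmod (complexify f y1) * cmod (complexify f (generator T x0))
      \<le> cmod (complexify f (generator T y))"
    by (metis norm_mult norm_triangle_ineq2)
qed

lemma exists_kernel_point_large_complex_derivative:
  assumes f: "bounded_linear f"
    and unbounded: "\<And>N. \<exists>y\<in>gen_dom T. norm y \<le> 1 \<and> \<bar>f (generator T y)\<bar> > N"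
    and x0: "x0 \<in> gen_dom T" "complexify f x0 = 1"
  shows "\<exists>y\<in>gen_dom T. complexify f y = 0 \<and> cmod (complexify f (generator T y)) > N * norm y"
proof -
  define B where "B = onorm f"
  have "B \<ge> 0" using onorm_pos_le[OF f] by (simp add: B_def)
  define c where "c = cmod (complexify f (generator T x0))"
  define R where "R = 1 + 2 * B * norm x0"
  obtain y1 where y1: "y1 \<in> gen_dom T" "norm y1 \<le> 1"
    and large: "\<bar>f (generator T y1)\<bar> > (\<bar>N\<bar> + 1) * R + 2 * B * c"
    using unbounded by blast
  have "cmod (complexify f y1) \<le> 2 * B * norm y1"
    using norm_complexify_le[OF f] by (simp add: B_def)
  moreover have "2 * B * norm y1 \<le> 2 * B" using y1(2) \<open>B \<ge> 0\<close> by (simp add: mult_left_le)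
  ultimately have small: "cmod (complexify f y1) \<le> 2 * B" by linarith
  define y where "y = y1 - scaleC (complexify f y1) x0"
  note projection = generator_kernel_projection[OF f x0 y1(1), folded y_def]
  have "norm y \<le> R"
    using projection(3) y1(2) mult_right_mono[OF small norm_ge_zero[of x0]] by (simp add: R_def)
  have "N * norm y \<le> (\<bar>N\<bar> + 1) * norm y" by (intro mult_right_mono) auto
  also have "\<dots> \<le> (\<bar>N\<bar> + 1) * R" using \<open>norm y \<le> R\<close> by (intro mult_left_mono) auto
  finally have "N * norm y \<le> (\<bar>N\<bar> + 1) * R" .
  moreover have "\<bar>f (generator T y1)\<bar> \<le> cmod (complexify f (generator T y1))"
    using abs_Re_le_cmod[of "complexify f (generator T y1)"] by (simp add: f)
  moreover have "cmod (complexify f y1) * c \<le> 2 * B * c"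
    unfolding c_def using small by (intro mult_right_mono) auto
  ultimately have "cmod (complexify f (generator T y)) > N * norm y"
    using projection(4) large unfolding c_def by linarith
  then show ?thesis using projection(1,2) by blast
qed

lemma exists_kernel_point_large_derivative:
  assumes f: "bounded_linear f"
    and unbounded: "\<And>N. \<exists>y\<in>gen_dom T. norm y \<le> 1 \<and> \<bar>f (generator T y)\<bar> > N"
    and x0: "x0 \<in> gen_dom T" "complexify f x0 = 1"
  shows "\<exists>y\<in>gen_dom T. norm y \<le> 1 \<and> complexify f y = 0 \<and> f (generator T y) > N"
proof -
  obtain y0 where y0: "y0 \<in> gen_dom T" "complexify f y0 = 0"
    and large: "cmod (complexify f (generator T y0)) > \<bar>N\<bar> * norm y0"
    using exists_kernel_point_large_complex_derivative[OF assms] by blast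
  define w where "w = complexify f (generator T y0)"
  have "y0 \<noteq> 0"
    using large generator_zero by (auto simp: complexify_def linear_simps[OF f] complex_eq_iff)
  have "w \<noteq> 0"
  proof
    assume "w = 0"
    then have "\<bar>N\<bar> * norm y0 < 0" using large by (simp add: w_def)
    then show False by (simp add: mult_less_0_iff)
  qed
  text \<open>Rotating and rescaling makes the derivative term real and positive.\<close>
  define u where "u = cnj w / complex_of_real (cmod w * norm y0)"
  define y where "y = scaleC u y0"
  have A_y: "generator T y = scaleC u (generator T y0)"
    using generator_scaleC[OF y0(1)] by (simp add: y_def)
  have "y \<in> gen_dom T" using generator_scaleC[OF y0(1)] by (simp add: y_def)
  moreover have "complexify f y = 0" by (simp add: y_def complexify_scaleC[OF f] y0(2))
  moreover have "norm y = 1"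
    using \<open>w \<noteq> 0\<close> \<open>y0 \<noteq> 0\<close> by (simp add: y_def u_def norm_scaleC norm_divide norm_mult)
  moreover have "f (generator T y) > N"
  proof -
    have "complexify f (generator T y) = u * w"
      by (simp add: A_y complexify_scaleC[OF f] w_def)
    also have "\<dots> = complex_of_real (cmod w / norm y0)"
      using \<open>w \<noteq> 0\<close> \<open>y0 \<noteq> 0\<close>
      by (simp add: u_def complex_norm_square[symmetric] power2_eq_square field_simps)
    finally have "f (generator T y) = cmod w / norm y0"
      using Re_complexify[OF f, of "generator T y"] by simp
    moreover have "cmod w / norm y0 > \<bar>N\<bar>"
      using large \<open>y0 \<noteq> 0\<close> by (simp add: w_def pos_less_divide_eq)
    ultimately show ?thesis by linarith
  qed
  ultimately show ?thesis by (intro bexI[of _ y]) simp_all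
qed

lemma exists_point_large_derivative:
  assumes f: "bounded_linear f"
    and unbounded: "\<And>N. \<exists>y\<in>gen_dom T. norm y \<le> 1 \<and> \<bar>f (generator T y)\<bar> > N"
    and x0: "x0 \<in> gen_dom T" "complexify f x0 = 1"
  shows "\<exists>x\<in>gen_dom T. complexify f x = 1 \<and> norm x \<le> norm x0 + 1 \<and> f (generator T x) > L"
proof -
  obtain y where y: "y \<in> gen_dom T" "norm y \<le> 1" "complexify f y = 0"
    "f (generator T y) > L - f (generator T x0)"
    using exists_kernel_point_large_derivative[OF assms] by blast
  have "x0 + y \<in> gen_dom T" "generator T (x0 + y) = generator T x0 + generator T y"
    using generator_add[OF x0(1) y(1)] by auto
  moreover have "complexify f (x0 + y) = 1" by (simp add: complexify_add[OF f] x0(2) y(3))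
  moreover have "norm (x0 + y) \<le> norm x0 + 1" using norm_triangle_ineq[of x0 y] y(2) by simp
  moreover have "f (generator T (x0 + y)) > L"
    using calculation(2) y(4) linear_simps(1)[OF f] by simp
  ultimately show ?thesis by blast
qed

lemma generator_bounded_on_dom_if_bounded_on_unit_ball:
  assumes unit_ball: "\<And>y. y \<in> gen_dom T \<Longrightarrow> norm y \<le> 1 \<Longrightarrow> norm (generator T y) \<le> C"
    and y: "y \<in> gen_dom T"
  shows "norm (generator T y) \<le> C * norm y"
proof (cases "y = 0")
  case True
  then show ?thesis using generator_zero by simp
next
  case False
  have "(1 / norm y) *\<^sub>R y \<in> gen_dom T" "norm ((1 / norm y) *\<^sub>R y) \<le> 1"
    using generator_scaleR[OF y] False by auto
  then have "norm (generator T ((1 / norm y) *\<^sub>R y)) \<le> C" by (rule unit_ball)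
  then have "norm ((1 / norm y) *\<^sub>R generator T y) \<le> C"
    using generator_scaleR[OF y] by simp
  then show ?thesis using False by (simp add: field_simps)
qed

lemma generator_bounded_on_dom_if_weakly_bounded:
  assumes weakly_bounded:
    "\<And>f :: 'a \<Rightarrow> real. bounded_linear f \<Longrightarrow> \<exists>N. \<forall>y\<in>gen_dom T. norm y \<le> 1 \<longrightarrow> \<bar>f (generator T y)\<bar> \<le> N"
  shows "\<exists>C\<ge>0. \<forall>y\<in>gen_dom T. norm (generator T y) \<le> C * norm y"
proof -
  define \<Phi> :: "'a \<Rightarrow> ('a \<Rightarrow>\<^sub>L real) \<Rightarrow> real" where
    "\<Phi> y = (if y \<in> gen_dom T \<and> norm y \<le> 1 then (\<lambda>\<phi>. \<phi> (generator T y)) else (\<lambda>\<phi>. 0))" for y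
  have "bounded_linear (\<Phi> y)" for y
    unfolding \<Phi>_def by (simp add: blinfun.bounded_linear_left bounded_linear_zero)
  moreover have "\<exists>B. \<forall>y. norm (\<Phi> y \<phi>) \<le> B" for \<phi>
  proof -
    obtain N where "\<forall>y\<in>gen_dom T. norm y \<le> 1 \<longrightarrow> \<bar>\<phi> (generator T y)\<bar> \<le> N"
      using weakly_bounded[OF blinfun.bounded_linear_right] by blast
    then have "norm (\<Phi> y \<phi>) \<le> max N 0" for y
      by (simp add: \<Phi>_def le_max_iff_disj)
    then show ?thesis by blast
  qed
  ultimately obtain C where "C \<ge> 0" and C: "\<And>y \<phi>. norm (\<Phi> y \<phi>) \<le> C * norm \<phi>"
    using uniform_boundedness[of \<Phi>] by blast
  have "norm (generator T y) \<le> C" if "y \<in> gen_dom T" "norm y \<le> 1" for y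
  proof (rule norm_le_if_dual_bounded[OF \<open>C \<ge> 0\<close>])
    fix \<phi> :: "'a \<Rightarrow>\<^sub>L real"
    show "\<bar>blinfun_apply \<phi> (generator T y)\<bar> \<le> C * norm \<phi>"
      using C[of y \<phi>] that by (simp add: \<Phi>_def)
  qed
  then have "norm (generator T y) \<le> C * norm y" if "y \<in> gen_dom T" for y
    using generator_bounded_on_dom_if_bounded_on_unit_ball that by blast
  with \<open>C \<ge> 0\<close> show ?thesis by blast
qed

end

section \<open>Orbit integrals and the domain of the generator\<close>

locale locally_bounded_semigroup = strongly_continuous_semigroup +
  fixes \<delta> M :: real
  assumes \<delta>_pos: "\<delta> > 0" and M_ge_1: "M \<ge> 1"
    and norm_T_le: "\<And>t x. t \<in> {0..\<delta>} \<Longrightarrow> norm (T t x) \<le> M * norm x"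
begin

lemma continuous_on_orbit: "continuous_on {0..\<delta>} (\<lambda>r. T r z)"
  unfolding continuous_on_iff
proof (intro ballI allI impI)
  fix r e :: real assume r: "r \<in> {0..\<delta>}" and e: "e > 0"
  have "\<forall>\<^sub>F h in at_right 0. dist (T h z) z < e / M"
    using tendsto_T_0 e M_ge_1 by (simp add: tendsto_iff)
  then obtain b where b: "b > 0" "\<And>h. 0 < h \<Longrightarrow> h < b \<Longrightarrow> norm (T h z - z) < e / M"
    unfolding eventually_at_right_field dist_norm by auto
  show "\<exists>d>0. \<forall>r'\<in>{0..\<delta>}. dist r' r < d \<longrightarrow> dist (T r' z) (T r z) < e"
  proof (intro exI[of _ b] conjI ballI impI b)
    fix r' assume r': "r' \<in> {0..\<delta>}" "dist r' r < b"
    have small: "norm (T s (T h z - z)) < e" if "s \<in> {0..\<delta>}" "0 < h" "h < b" for s h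
    proof -
      have "norm (T s (T h z - z)) \<le> M * norm (T h z - z)" using norm_T_le[OF that(1)] .
      also have "\<dots> < M * (e / M)"
        using b(2)[OF that(2,3)] M_ge_1 by (intro mult_strict_left_mono) auto
      finally show ?thesis using M_ge_1 by simp
    qed
    consider "r' = r" | "r < r'" | "r' < r" by linarith
    then show "dist (T r' z) (T r z) < e"
    proof cases
      case 2
      then have "T r' z - T r z = T r (T (r' - r) z - z)"
        using T_add_time[of r "r' - r"] T_diff r by simp
      then show ?thesis using small[OF r, of "r' - r"] 2 r' by (simp add: dist_norm dist_real_def)
    next
      case 3
      then have "T r z - T r' z = T r' (T (r - r') z - z)"
        using T_add_time[of r' "r - r'"] T_diff r' by simp
      then have "dist (T r' z) (T r z) = norm (T r' (T (r - r') z - z))"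
        by (metis dist_commute dist_norm)
      then show ?thesis using small[OF r'(1), of "r - r'"] 3 r' by (simp add: dist_real_def)
    qed (use e in simp)
  qed
qed

definition orbit_integral :: "'a \<Rightarrow> real \<Rightarrow> 'a" where
  "orbit_integral z u = integral {0..u} (\<lambda>r. T r z)"

lemma orbit_integral_0 [simp]: "orbit_integral z 0 = 0"
  by (simp add: orbit_integral_def)

lemma orbit_integrable: "0 \<le> a \<Longrightarrow> u \<le> \<delta> \<Longrightarrow> (\<lambda>r. T r z) integrable_on {a..u}"
  by (intro integrable_continuous_real continuous_on_subset[OF continuous_on_orbit]) auto

lemma has_vector_derivative_orbit_integral:
  "u \<in> {0..\<delta>} \<Longrightarrow> (orbit_integral z has_vector_derivative T u z) (at u within {0..\<delta>})"
  unfolding orbit_integral_def by (rule integral_has_vector_derivative[OF continuous_on_orbit])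

lemma tendsto_orbit_average_at:
  assumes "0 \<le> s" "s < \<delta>"
  shows "((\<lambda>h. (1 / h) *\<^sub>R (orbit_integral z (s + h) - orbit_integral z s)) \<longlongrightarrow> T s z)
    (at_right 0)"
  using assms
  by (intro tendsto_right_difference_quotient has_vector_derivative_within_subset[OF
        has_vector_derivative_orbit_integral]) auto

lemma tendsto_orbit_average: "((\<lambda>s. (1 / s) *\<^sub>R orbit_integral z s) \<longlongrightarrow> z) (at_right 0)"
  using tendsto_orbit_average_at[of 0 z] \<delta>_pos by (simp add: orbit_integral_def)

lemma T_orbit_integral:
  assumes "0 \<le> h" "0 \<le> s" "s + h \<le> \<delta>"
  shows "T h (orbit_integral z s) = orbit_integral z (s + h) - orbit_integral z h"
proof -
  have "T h (orbit_integral z s) = integral {0..s} (T h \<circ> (\<lambda>r. T r z))"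
    unfolding orbit_integral_def using assms
    by (intro integral_linear[symmetric] orbit_integrable bounded_linear_T) auto
  also have "\<dots> = integral {0..s} ((\<lambda>r. T r z) \<circ> (+) h)"
    by (rule integral_cong) (use assms in \<open>auto simp: T_add_time\<close>)
  also have "\<dots> = integral {h..s + h} (\<lambda>r. T r z)"
    by (subst integral_shift_Icc_real) (simp add: add.commute)
  also have "\<dots> = orbit_integral z (s + h) - orbit_integral z h"
    unfolding orbit_integral_def
    using Henstock_Kurzweil_Integration.integral_combine[of 0 h "s + h" "\<lambda>r. T r z"] orbit_integrable[of 0 "s + h" z] assms
    by (simp add: algebra_simps)
  finally show ?thesis .
qed

lemma orbit_average_in_gen_dom:
  assumes "0 < s" "s < \<delta>"
  shows "(1 / s) *\<^sub>R orbit_integral z s \<in> gen_dom T \<and>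
    generator T ((1 / s) *\<^sub>R orbit_integral z s) = (1 / s) *\<^sub>R (T s z - z)"
proof (rule generatorI)
  let ?I = "orbit_integral z"
  have "((\<lambda>h. (1 / s) *\<^sub>R ((1 / h) *\<^sub>R (?I (s + h) - ?I s) - (1 / h) *\<^sub>R (?I (0 + h) - ?I 0)))
      \<longlongrightarrow> (1 / s) *\<^sub>R (T s z - T 0 z)) (at_right 0)"
    using assms by (intro tendsto_scaleR tendsto_diff tendsto_const tendsto_orbit_average_at) auto
  moreover have "\<forall>\<^sub>F h in at_right 0. h > 0 \<and> h < \<delta> - s"
    using assms by (auto simp: eventually_at_right_field intro!: exI[of _ "\<delta> - s"])
  then have "\<forall>\<^sub>F h in at_right 0.
      (1 / s) *\<^sub>R ((1 / h) *\<^sub>R (?I (s + h) - ?I s) - (1 / h) *\<^sub>R (?I (0 + h) - ?I 0))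
      = diff_quot ((1 / s) *\<^sub>R ?I s) h"
  proof eventually_elim
    case (elim h)
    then have "T h ((1 / s) *\<^sub>R ?I s) = (1 / s) *\<^sub>R (?I (s + h) - ?I h)"
      using assms by (simp add: T_orbit_integral T_scaleR)
    then show ?case by (simp only:) (simp add: algebra_simps)
  qed
  ultimately show "((\<lambda>h. diff_quot ((1 / s) *\<^sub>R ?I s) h) \<longlongrightarrow> (1 / s) *\<^sub>R (T s z - z)) (at_right 0)"
    by (simp add: Lim_transform_eventually)
qed

lemma orbit_integral_diff:
  assumes "0 \<le> s" "s \<le> \<delta>"
  shows "orbit_integral (y1 - y2) s = orbit_integral y1 s - orbit_integral y2 s"
proof -
  have "orbit_integral (y1 - y2) s = integral {0..s} (\<lambda>r. T r y1 - T r y2)"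
    unfolding orbit_integral_def by (rule integral_cong) (simp add: T_diff)
  also have "\<dots> = orbit_integral y1 s - orbit_integral y2 s"
    unfolding orbit_integral_def using orbit_integrable[of 0 s] assms by (intro integral_diff) auto
  finally show ?thesis .
qed

lemma norm_orbit_integral_le:
  assumes "0 \<le> s" "s \<le> \<delta>"
  shows "norm (orbit_integral z s) \<le> M * norm z * s"
  using assms M_ge_1 norm_T_le orbit_integrable[of 0 s z]
    has_integral_bound[of "M * norm z" "\<lambda>r. T r z" "orbit_integral z s" 0 s]
  by (auto simp: orbit_integral_def)

lemma norm_orbit_integral_minus_le:
  assumes "0 \<le> s" "s \<le> \<delta>" "\<And>r. r \<in> {0..s} \<Longrightarrow> norm (T r z - z) \<le> e"
  shows "norm (orbit_integral z s - s *\<^sub>R z) \<le> e * s"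
proof -
  have "((\<lambda>r. T r z - z) has_integral (orbit_integral z s - s *\<^sub>R z)) {0..s}"
    using has_integral_diff[OF integrable_integral[OF orbit_integrable] has_integral_const_real]
      assms
    by (fastforce simp: orbit_integral_def)
  moreover have "0 \<le> e" using assms(1) assms(3)[of 0] by (smt (verit) atLeastAtMost_iff norm_ge_zero)
  ultimately show ?thesis
    using assms has_integral_bound[of e "\<lambda>r. T r z - z" _ 0 s] by auto
qed

subsection \<open>Bounded generators and quasi-contractivity\<close>

lemma diff_quot_bounded:
  assumes "y \<in> gen_dom T"
  shows "\<exists>B. \<forall>h\<in>{0<..\<delta>}. norm (diff_quot y h) \<le> B"
proof -
  have "\<forall>\<^sub>F h in at_right 0. dist (diff_quot y h) (generator T y) < 1"
    using tendsto_generator[OF assms] by (simp add: tendsto_iff)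
  then obtain b where b: "b > 0" "\<And>h. 0 < h \<Longrightarrow> h < b \<Longrightarrow> norm (diff_quot y h - generator T y) < 1"
    unfolding eventually_at_right_field dist_norm by auto
  have "norm (diff_quot y h) \<le> max (norm (generator T y) + 1) ((M + 1) * norm y / b)"
    if h: "h \<in> {0<..\<delta>}" for h
  proof (cases "h < b")
    case True
    then have "norm (diff_quot y h) \<le> norm (generator T y) + 1"
      using b(2)[of h] h norm_triangle_ineq2[of "diff_quot y h" "generator T y"] by simp
    then show ?thesis by simp
  next
    case False
    have "norm (T h y - y) \<le> (M + 1) * norm y"
      using norm_triangle_ineq4[of "T h y" y] norm_T_le[of h y] h by (simp add: algebra_simps)
    then have "norm (diff_quot y h) \<le> (M + 1) * norm y / h"
      using h by (simp add: divide_right_mono)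
    also have "\<dots> \<le> (M + 1) * norm y / b"
      using False b M_ge_1 by (intro divide_left_mono) auto
    finally show ?thesis by simp
  qed
  then show ?thesis by blast
qed

lemma uniform_diff_quot_bound:
  assumes "gen_dom T = UNIV"
  obtains C where "C \<ge> 0" "\<And>h y. h \<in> {0<..\<delta>} \<Longrightarrow> norm (diff_quot y h) \<le> C * norm y"
proof -
  define G where "G h = (if h \<in> {0<..\<delta>} then (\<lambda>y. diff_quot y h) else (\<lambda>y. 0))" for h
  have "bounded_linear (G h)" for h
  proof (cases "h \<in> {0<..\<delta>}")
    case True
    then have "bounded_linear (\<lambda>y. diff_quot y h)"
      by (intro bounded_linear_compose[OF bounded_linear_scaleR_right] bounded_linear_sub
          bounded_linear_T bounded_linear_ident) auto
    then show ?thesis using True by (simp add: G_def)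
  next
    case False
    then show ?thesis by (simp only: G_def if_not_P if_False) (rule bounded_linear_zero)
  qed
  moreover have "\<exists>B. \<forall>h. norm (G h y) \<le> B" for y
  proof -
    obtain B where B: "\<forall>h\<in>{0<..\<delta>}. norm (diff_quot y h) \<le> B"
      using diff_quot_bounded assms by blast
    then have "norm (G h y) \<le> max B 0" for h
    proof (cases "h \<in> {0<..\<delta>}")
      case True
      then show ?thesis using B by (simp only: G_def if_P) (meson le_max_iff_disj)
    next
      case False
      then show ?thesis by (simp only: G_def if_not_P if_False) simp
    qed
    then show ?thesis by blast
  qed
  ultimately obtain C where "C \<ge> 0" and C: "\<And>h y. norm (G h y) \<le> C * norm y"
    using uniform_boundedness[of G] by blast
  have "norm (diff_quot y h) \<le> C * norm y" if "h \<in> {0<..\<delta>}" for h y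
    using C[of h y] that by (simp only: G_def if_P)
  with \<open>C \<ge> 0\<close> show ?thesis using that by blast
qed

lemma generator_bounded_iff_gen_dom_UNIV: "generator_bounded T \<longleftrightarrow> gen_dom T = UNIV"
proof
  assume dom: "gen_dom T = UNIV"
  then obtain C where "C \<ge> 0" and C: "\<And>h y. h \<in> {0<..\<delta>} \<Longrightarrow> norm (diff_quot y h) \<le> C * norm y"
    using uniform_diff_quot_bound by blast
  have "norm (generator T y) \<le> C * norm y" for y
  proof (rule tendsto_le[OF trivial_limit_at_right_real tendsto_const])
    show "((\<lambda>h. norm (diff_quot y h)) \<longlongrightarrow> norm (generator T y)) (at_right 0)"
      using tendsto_generator[of y] dom by (intro tendsto_norm) auto
    have "\<forall>\<^sub>F h in at_right 0. h \<in> {0<..\<delta>}"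
      unfolding eventually_at_right_field using \<delta>_pos by (intro exI[of _ \<delta>]) auto
    then show "\<forall>\<^sub>F h in at_right 0. norm (diff_quot y h) \<le> C * norm y"
      by eventually_elim (rule C)
  qed
  then have "bounded_linear (generator T)"
    using generator_add generator_scaleR dom
    by (intro bounded_linear_intro[of _ C]) (auto simp: mult.commute)
  with dom show "generator_bounded T" unfolding generator_bounded_def by blast
qed (simp add: generator_bounded_def)

lemma norm_T_minus_le_if_generator_bounded_on_dom:
  assumes "C \<ge> 0" and A: "\<And>y. y \<in> gen_dom T \<Longrightarrow> norm (generator T y) \<le> C * norm y"
    and s: "0 < s" "s < \<delta>"
  shows "norm (T s z - z) \<le> C * M * s * norm z"
proof -
  let ?x = "(1 / s) *\<^sub>R orbit_integral z s"
  have "norm (T s z - z) = s * norm (generator T ?x)"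
    using orbit_average_in_gen_dom[OF s, of z] s by simp
  also have "norm (generator T ?x) \<le> C * norm ?x"
    using A orbit_average_in_gen_dom[OF s] by blast
  then have "s * norm (generator T ?x) \<le> s * (C * norm ?x)"
    using s by (intro mult_left_mono) auto
  also have "norm ?x \<le> M * norm z"
    using norm_orbit_integral_le[of s z] s by (simp add: field_simps)
  then have "s * (C * norm ?x) \<le> s * (C * (M * norm z))"
    using s \<open>C \<ge> 0\<close> by (intro mult_left_mono) auto
  finally show ?thesis by (simp add: algebra_simps)
qed

lemma exists_time_T_near_id_if_generator_bounded_on_dom:
  assumes "C \<ge> 0" and "\<And>y. y \<in> gen_dom T \<Longrightarrow> norm (generator T y) \<le> C * norm y"
  obtains s where "0 < s" "s < \<delta>" "\<And>r z. r \<in> {0..s} \<Longrightarrow> norm (T r z - z) \<le> norm z / 2"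
proof -
  define s where "s = min (\<delta> / 2) (1 / (2 * (C * M + 1)))"
  have CM: "C * M \<ge> 0" using \<open>C \<ge> 0\<close> M_ge_1 by simp
  have s: "0 < s" "s < \<delta>" using \<delta>_pos CM by (auto simp: s_def)
  have "C * M * s \<le> C * M * (1 / (2 * (C * M + 1)))"
    using CM by (intro mult_left_mono) (auto simp: s_def)
  also have "\<dots> \<le> 1 / 2" using CM by (simp add: field_simps)
  finally have CMs: "C * M * s \<le> 1 / 2" .
  have "norm (T r z - z) \<le> norm z / 2" if "r \<in> {0..s}" for r z
  proof (cases "r = 0")
    case False
    then have "norm (T r z - z) \<le> C * M * r * norm z"
      using norm_T_minus_le_if_generator_bounded_on_dom[OF assms] that s by auto
    also have "\<dots> \<le> C * M * s * norm z" using that CM by (intro mult_right_mono mult_left_mono) auto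
    also have "\<dots> \<le> 1 / 2 * norm z" using CMs by (intro mult_right_mono) auto
    finally show ?thesis by simp
  qed simp
  with s that show ?thesis by blast
qed

text \<open>The orbit average \<open>V y = (1/s) \<integral>\<^sub>0\<^sup>s T r y dr\<close> takes values in the domain of the
  generator, and \<open>V - id\<close> is a contraction for small \<open>s\<close>; hence \<open>V\<close> is onto by Banach's
  fixed point theorem.\<close>
lemma gen_dom_UNIV_if_generator_bounded_on_dom:
  assumes "C \<ge> 0" and "\<And>y. y \<in> gen_dom T \<Longrightarrow> norm (generator T y) \<le> C * norm y"
  shows "gen_dom T = UNIV"
proof -
  obtain s where s: "0 < s" "s < \<delta>" and near_id: "\<And>r z. r \<in> {0..s} \<Longrightarrow> norm (T r z - z) \<le> norm z / 2"
    using exists_time_T_near_id_if_generator_bounded_on_dom[OF assms] by blast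
  define V where "V y = (1 / s) *\<^sub>R orbit_integral y s" for y
  have V_near_id: "norm (V y - y) \<le> norm y / 2" for y
  proof -
    have "V y - y = (1 / s) *\<^sub>R (orbit_integral y s - s *\<^sub>R y)"
      using s by (simp add: V_def algebra_simps)
    then have "norm (V y - y) = norm (orbit_integral y s - s *\<^sub>R y) / s"
      using s by simp
    moreover have "norm (orbit_integral y s - s *\<^sub>R y) \<le> norm y / 2 * s"
      using s near_id by (intro norm_orbit_integral_minus_le) auto
    ultimately show ?thesis using s by (simp add: pos_divide_le_eq)
  qed
  have V_diff: "V (y1 - y2) = V y1 - V y2" for y1 y2
    using s orbit_integral_diff[of s y1 y2] by (simp add: V_def scaleR_diff_right)
  have "z \<in> gen_dom T" for z
  proof -
    have "dist (z + x - V x) (z + y - V y) \<le> 1 / 2 * dist x y" for x y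
      using V_near_id[of "x - y"] V_diff[of x y] by (simp add: dist_norm algebra_simps norm_minus_commute)
    then have "\<forall>x y. dist (z + x - V x) (z + y - V y) \<le> 1 / 2 * dist x y" by blast
    from banach_fix_type[OF _ _ this] obtain y where "z + y - V y = y" by auto
    then have "V y = z" by (simp add: algebra_simps)
    then show ?thesis using orbit_average_in_gen_dom[OF s, of y] by (simp add: V_def)
  qed
  then show ?thesis by blast
qed

lemma norm_T_le_exp_if_step_bound:
  assumes "is_cnorm n" "L \<ge> 0"
    and step: "\<And>h y. h \<in> {0..\<delta>} \<Longrightarrow> n (T h y) \<le> (1 + L * h) * n y"
    and "t \<ge> 0"
  shows "n (T t x) \<le> exp (L * t) * n x"
proof -
  define N where "N = nat \<lceil>t / \<delta>\<rceil> + 1"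
  define h where "h = t / real N"
  have "real N \<ge> t / \<delta>" "N \<ge> 1" unfolding N_def by linarith+
  then have h: "h \<in> {0..\<delta>}" and t: "t = real N * h"
    using \<open>t \<ge> 0\<close> \<delta>_pos by (auto simp: h_def field_simps)
  have "n (T (real k * h) y) \<le> (1 + L * h) ^ k * n y" for k y
  proof (induction k arbitrary: y)
    case (Suc k)
    have "T (real (Suc k) * h) y = T h (T (real k * h) y)"
      using T_add_time[of h "real k * h" y] h by (simp add: algebra_simps)
    then have "n (T (real (Suc k) * h) y) \<le> (1 + L * h) * n (T (real k * h) y)"
      using step[OF h] by simp
    also have "\<dots> \<le> (1 + L * h) * ((1 + L * h) ^ k * n y)"
      using Suc \<open>L \<ge> 0\<close> h by (intro mult_left_mono) auto
    finally show ?case by simp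
  qed simp
  also have "(1 + L * h) ^ N * n x \<le> exp (L * h) ^ N * n x"
    using \<open>L \<ge> 0\<close> h cnorm_nonneg[OF assms(1)] by (intro mult_right_mono power_mono) auto
  also have "exp (L * h) ^ N = exp (L * t)"
    using t by (simp add: exp_of_nat_mult[symmetric] algebra_simps)
  finally show ?thesis using t by simp
qed

lemma quasi_contractive_if_generator_bounded:
  assumes "generator_bounded T" and "equiv_norm n"
  shows "\<exists>l. \<forall>t\<ge>0. opnorm_wrt n (T t) \<le> exp (l * t)"
proof -
  obtain a b where n: "is_cnorm n" "a > 0" "b > 0" "\<And>x. a * norm x \<le> n x" "\<And>x. n x \<le> b * norm x"
    using equiv_normE[OF assms(2)] by blast
  have "gen_dom T = UNIV" using assms(1) generator_bounded_iff_gen_dom_UNIV by simp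
  then obtain C where "C \<ge> 0" and C: "\<And>h y. h \<in> {0<..\<delta>} \<Longrightarrow> norm (diff_quot y h) \<le> C * norm y"
    using uniform_diff_quot_bound by blast
  define L where "L = b * C / a"
  have "L \<ge> 0" using n \<open>C \<ge> 0\<close> by (simp add: L_def)
  have "n (T h y) \<le> (1 + L * h) * n y" if "h \<in> {0..\<delta>}" for h y
  proof (cases "h = 0")
    case False
    then have h: "h \<in> {0<..\<delta>}" using that by auto
    have "norm (T h y - y) = h * norm (diff_quot y h)" using h by simp
    also have "\<dots> \<le> h * (C * norm y)" using C[OF h, of y] h by (intro mult_left_mono) auto
    finally have "norm (T h y - y) \<le> C * h * norm y" by (simp add: algebra_simps)
    have "n (T h y) = n (y + (T h y - y))" by simp
    also have "\<dots> \<le> n y + n (T h y - y)" using n(1) unfolding is_cnorm_def by blast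
    also have "n (T h y - y) \<le> b * norm (T h y - y)" by (rule n(5))
    also have "\<dots> \<le> b * (C * h * norm y)"
      using \<open>norm (T h y - y) \<le> _\<close> n(3) by (intro mult_left_mono) auto
    also have "\<dots> = L * h * (a * norm y)" using n(2) by (simp add: L_def field_simps)
    also have "\<dots> \<le> L * h * n y" using n(4)[of y] \<open>L \<ge> 0\<close> h by (intro mult_left_mono) auto
    finally show ?thesis by (simp add: algebra_simps)
  qed simp
  then have "n (T t x) \<le> exp (L * t) * n x" if "t \<ge> 0" for t x
    using norm_T_le_exp_if_step_bound[OF n(1) \<open>L \<ge> 0\<close>] that by blast
  then show ?thesis using opnorm_wrt_le[OF n(1) exp_ge_zero] by blast
qed

lemma exists_functional_unbounded_on_generator:
  assumes "gen_dom T \<noteq> UNIV"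
  shows "\<exists>f :: 'a \<Rightarrow> real. bounded_linear f \<and>
    (\<forall>N. \<exists>y\<in>gen_dom T. norm y \<le> 1 \<and> \<bar>f (generator T y)\<bar> > N)"
proof -
  have "\<not> (\<forall>f :: 'a \<Rightarrow> real. bounded_linear f \<longrightarrow>
      (\<exists>N. \<forall>y\<in>gen_dom T. norm y \<le> 1 \<longrightarrow> \<bar>f (generator T y)\<bar> \<le> N))"
  proof
    assume "\<forall>f :: 'a \<Rightarrow> real. bounded_linear f \<longrightarrow>
      (\<exists>N. \<forall>y\<in>gen_dom T. norm y \<le> 1 \<longrightarrow> \<bar>f (generator T y)\<bar> \<le> N)"
    then have "\<exists>C\<ge>0. \<forall>y\<in>gen_dom T. norm (generator T y) \<le> C * norm y"
      by (intro generator_bounded_on_dom_if_weakly_bounded) blast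
    then obtain C where "C \<ge> 0" and C: "\<And>y. y \<in> gen_dom T \<Longrightarrow> norm (generator T y) \<le> C * norm y"
      by blast
    then show False using gen_dom_UNIV_if_generator_bounded_on_dom[OF \<open>C \<ge> 0\<close> C] assms by blast
  qed
  then show ?thesis by (auto simp: not_le)
qed

lemma exists_gen_dom_complexify_one:
  assumes f: "bounded_linear f" and "f z \<noteq> 0"
  obtains x where "x \<in> gen_dom T" "complexify f x = 1"
proof -
  have "((\<lambda>s. f ((1 / s) *\<^sub>R orbit_integral z s)) \<longlongrightarrow> f z) (at_right 0)"
    using bounded_linear.tendsto[OF f tendsto_orbit_average] .
  then have "\<forall>\<^sub>F s in at_right 0. f ((1 / s) *\<^sub>R orbit_integral z s) \<noteq> 0"
    using \<open>f z \<noteq> 0\<close> by (rule tendsto_imp_eventually_ne)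
  moreover have "\<forall>\<^sub>F s in at_right 0. 0 < s \<and> s < \<delta>"
    unfolding eventually_at_right_field using \<delta>_pos by (intro exI[of _ \<delta>]) auto
  ultimately obtain s where s: "f ((1 / s) *\<^sub>R orbit_integral z s) \<noteq> 0" "0 < s" "s < \<delta>"
    using eventually_happens'[OF trivial_limit_at_right_real eventually_conj] by blast
  define x1 where "x1 = (1 / s) *\<^sub>R orbit_integral z s"
  have "x1 \<in> gen_dom T" using orbit_average_in_gen_dom[OF s(2,3)] by (simp add: x1_def)
  moreover have "complexify f x1 \<noteq> 0"
    using s(1) Re_complexify[OF f, of x1] by (auto simp: x1_def)
  ultimately show ?thesis
    using that[of "scaleC (1 / complexify f x1) x1"] generator_scaleC[of x1 "1 / complexify f x1"]
      complexify_scaleC[OF f, of "1 / complexify f x1" x1]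
    by force
qed

lemma generator_bounded_if_quasi_contractive:
  assumes quasi_contractive:
    "\<forall>n. equiv_norm n \<longrightarrow> (\<exists>l::real. \<forall>t\<ge>0. opnorm_wrt n (T t) \<le> exp (l * t))"
  shows "generator_bounded T"
proof (rule ccontr)
  assume "\<not> generator_bounded T"
  then have "gen_dom T \<noteq> UNIV" using generator_bounded_iff_gen_dom_UNIV by simp
  then obtain f :: "'a \<Rightarrow> real" where f: "bounded_linear f"
    and unbounded: "\<And>N. \<exists>y\<in>gen_dom T. norm y \<le> 1 \<and> \<bar>f (generator T y)\<bar> > N"
    using exists_functional_unbounded_on_generator by blast
  obtain y0 where "\<bar>f (generator T y0)\<bar> > 0" using unbounded[of 0] by blast
  then have "f (generator T y0) \<noteq> 0" by linarith
  then obtain x0 where x0: "x0 \<in> gen_dom T" "complexify f x0 = 1"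
    by (rule exists_gen_dom_complexify_one[OF f])
  define K where "K = norm x0 + 1"
  define n where "n = functional_max_norm K f"
  have "equiv_norm n" using equiv_norm_functional_max_norm[OF f] by (simp add: n_def K_def)
  then obtain l where l: "\<And>t. t \<ge> 0 \<Longrightarrow> opnorm_wrt n (T t) \<le> exp (l * t)"
    using quasi_contractive by blast
  obtain x where x: "x \<in> gen_dom T" "complexify f x = 1" "norm x \<le> K" "f (generator T x) > l"
    using exists_point_large_derivative[OF f unbounded x0] unfolding K_def by blast
  then have "f x = 1" "n x = K"
    using Re_complexify[OF f, of x] by (auto simp: n_def functional_max_norm_def)
  then obtain h where "h > 0" "f (T h x) > exp (l * h)"
    using exists_time_above_exp[OF f x(1)] x(4) by blast
  moreover have "K > 0" by (simp add: K_def add_nonneg_pos)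
  ultimately have "exp (l * h) * n x < K * f (T h x)"
    using \<open>n x = K\<close> by (metis mult.commute mult_strict_left_mono)
  also have "\<dots> \<le> n (T h x)"
    using abs_Re_le_cmod[of "complexify f (T h x)"] \<open>K > 0\<close>
    by (auto simp: n_def functional_max_norm_def f intro!: max.coboundedI2 mult_left_mono)
  also have "\<dots> \<le> opnorm_wrt n (T h) * n x"
    using le_opnorm_wrt[OF \<open>equiv_norm n\<close> bounded_linear_T] \<open>h > 0\<close> by simp
  also have "\<dots> \<le> exp (l * h) * n x"
    using l \<open>h > 0\<close> \<open>n x = K\<close> \<open>K > 0\<close> by (intro mult_right_mono) auto
  finally show False by simp
qed

end

theorem corollary1:
  fixes T :: "real \<Rightarrow> 'a::complex_banach \<Rightarrow> 'a"
  assumes "c0_semigroup T"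
  shows "generator_bounded T \<longleftrightarrow>
    (\<forall>n. equiv_norm n \<longrightarrow> (\<exists>l::real. \<forall>t\<ge>0. opnorm_wrt n (T t) \<le> exp (l * t)))"
proof -
  interpret strongly_continuous_semigroup T by unfold_locales (rule assms)
  obtain \<delta> M where "\<delta> > 0" "M \<ge> 1" "\<forall>t\<in>{0..\<delta>}. \<forall>x. norm (T t x) \<le> M * norm x"
    using exists_local_bound by blast
  then interpret locally_bounded_semigroup T \<delta> M by unfold_locales auto
  show ?thesis
    using quasi_contractive_if_generator_bounded generator_bounded_if_quasi_contractive by blast
qed

end
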